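(* If \(M\) is a nuclear bornological \(V\)-module, then so is its completion \(\overline{M}\).
   Context: Let \(V\) be a complete discrete valuation ring with uniformiser \(\pi\). A bornology on a set is a collection of subsets (called bounded) containing all finite subsets and closed under finite unions and under taking subsets. A bornological \(V\)-module is a \(V\)-module with a bornology such that every bounded subset is contained in a bounded \(V\)-submodule; bounded maps are \(V\)-linear maps sending bounded sets to bounded sets. It is complete if every bounded subset is contained in a bounded, \(\pi\)-adically complete \(V\)-submodule. Every bornological \(V\)-module \(M\) has a completion \(\overline{M}\): a complete bornological \(V\)-module with a bounded map \(M\to\overline M\) through which every bounded map from \(M\) to a complete bornological \(V\)-module factors uniquely. A subset \(S\) of a bornological \(V\)-module \(M\) is compactoid if there is a bounded \(V\)-submodule \(T\subseteq M\) with \(S\subseteq T\) such that for every \(n\in\mathbb N\) there is a finite set \(F_n\subseteq T\) with \(S\subseteq VF_n+\pi^nT\). \(M\) is nuclear if every bounded subset of \(M\) is compactoid. *)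

theory Defs
  imports "HOL-Algebra.Module" "HOL-Algebra.FiniteProduct"
begin

text \<open>Completeness: every pi-adic Cauchy sequence converges pi-adically
  (separatedness is automatic in a DVR).\<close>

definition pi_ideal :: "('v, 'x) ring_scheme \<Rightarrow> 'v \<Rightarrow> nat \<Rightarrow> 'v set" where
  "pi_ideal V p n = {p [^]\<^bsub>V\<^esub> n \<otimes>\<^bsub>V\<^esub> a | a. a \<in> carrier V}"

definition complete_dvr :: "('v, 'x) ring_scheme \<Rightarrow> 'v \<Rightarrow> bool" where
  "complete_dvr V p \<longleftrightarrow>
     domain V \<and> p \<in> carrier V \<and> p \<noteq> \<zero>\<^bsub>V\<^esub> \<and> p \<notin> Units V \<and>
     (\<forall>x\<in>carrier V. x \<noteq> \<zero>\<^bsub>V\<^esub> \<longrightarrow>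
        (\<exists>u\<in>Units V. \<exists>n::nat. x = u \<otimes>\<^bsub>V\<^esub> (p [^]\<^bsub>V\<^esub> n))) \<and>
     (\<forall>x::nat \<Rightarrow> 'v. (\<forall>n. x n \<in> carrier V) \<and>
        (\<forall>n. x (Suc n) \<ominus>\<^bsub>V\<^esub> x n \<in> pi_ideal V p n) \<longrightarrow>
        (\<exists>y\<in>carrier V. \<forall>n. x n \<ominus>\<^bsub>V\<^esub> y \<in> pi_ideal V p n))"

definition pi_mult :: "('v, 'x) ring_scheme \<Rightarrow> ('v, 'm) module \<Rightarrow> 'v \<Rightarrow> nat \<Rightarrow> 'm set \<Rightarrow> 'm set" where
  "pi_mult V M p n T = (\<lambda>t. (p [^]\<^bsub>V\<^esub> n) \<odot>\<^bsub>M\<^esub> t) ` T"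

text \<open>T is pi-adically complete: separated and every pi-adic Cauchy sequence in T
  has a limit in T (i.e. T \<rightarrow> lim T/pi^n T is bijective).\<close>
definition padic_complete :: "('v, 'x) ring_scheme \<Rightarrow> ('v, 'm) module \<Rightarrow> 'v \<Rightarrow> 'm set \<Rightarrow> bool" where
  "padic_complete V M p T \<longleftrightarrow>
     (\<Inter>n. pi_mult V M p n T) = {\<zero>\<^bsub>M\<^esub>} \<and>
     (\<forall>x::nat \<Rightarrow> 'm. (\<forall>n. x n \<in> T) \<and>
        (\<forall>n. x (Suc n) \<ominus>\<^bsub>M\<^esub> x n \<in> pi_mult V M p n T) \<longrightarrow>
        (\<exists>y\<in>T. \<forall>n. x n \<ominus>\<^bsub>M\<^esub> y \<in> pi_mult V M p n T))"

definition bornological_module :: "('v, 'x) ring_scheme \<Rightarrow> ('v, 'm) module \<Rightarrow> 'm set set \<Rightarrow> bool" where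
  "bornological_module V M B \<longleftrightarrow>
     module V M \<and>
     (\<forall>S\<in>B. S \<subseteq> carrier M) \<and>
     (\<forall>S. finite S \<and> S \<subseteq> carrier M \<longrightarrow> S \<in> B) \<and>
     (\<forall>S\<in>B. \<forall>T\<in>B. S \<union> T \<in> B) \<and>
     (\<forall>S\<in>B. \<forall>T. T \<subseteq> S \<longrightarrow> T \<in> B) \<and>
     (\<forall>S\<in>B. \<exists>T\<in>B. submodule T V M \<and> S \<subseteq> T)"

definition linear_map :: "('v, 'x) ring_scheme \<Rightarrow> ('v, 'm) module \<Rightarrow> ('v, 'n) module \<Rightarrow> ('m \<Rightarrow> 'n) \<Rightarrow> bool" where
  "linear_map V M N f \<longleftrightarrow>
     f \<in> carrier M \<rightarrow> carrier N \<and>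
     (\<forall>x\<in>carrier M. \<forall>y\<in>carrier M. f (x \<oplus>\<^bsub>M\<^esub> y) = f x \<oplus>\<^bsub>N\<^esub> f y) \<and>
     (\<forall>a\<in>carrier V. \<forall>x\<in>carrier M. f (a \<odot>\<^bsub>M\<^esub> x) = a \<odot>\<^bsub>N\<^esub> f x)"

definition bounded_map :: "('v, 'x) ring_scheme \<Rightarrow> ('v, 'm) module \<Rightarrow> 'm set set
     \<Rightarrow> ('v, 'n) module \<Rightarrow> 'n set set \<Rightarrow> ('m \<Rightarrow> 'n) \<Rightarrow> bool" where
  "bounded_map V M BM N BN f \<longleftrightarrow> linear_map V M N f \<and> (\<forall>S\<in>BM. f ` S \<in> BN)"

definition complete_born :: "('v, 'x) ring_scheme \<Rightarrow> 'v \<Rightarrow> ('v, 'm) module \<Rightarrow> 'm set set \<Rightarrow> bool" where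
  "complete_born V p M B \<longleftrightarrow>
     (\<forall>S\<in>B. \<exists>T\<in>B. submodule T V M \<and> S \<subseteq> T \<and> padic_complete V M p T)"

text \<open>Completion, via its universal property.  Targets range over bornological
  modules whose carrier lives in the same HOL type as the completion.\<close>
definition is_completion :: "('v, 'x) ring_scheme \<Rightarrow> 'v \<Rightarrow> ('v, 'm) module \<Rightarrow> 'm set set
     \<Rightarrow> ('v, 'c) module \<Rightarrow> 'c set set \<Rightarrow> ('m \<Rightarrow> 'c) \<Rightarrow> bool" where
  "is_completion V p M BM C BC \<iota> \<longleftrightarrow>
     bornological_module V C BC \<and> complete_born V p C BC \<and> bounded_map V M BM C BC \<iota> \<and>
     (\<forall>(D::('v, 'c) module) BD g.
        bornological_module V D BD \<and> complete_born V p D BD \<and> bounded_map V M BM D BD g \<longrightarrow>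
        (\<exists>h. bounded_map V C BC D BD h \<and> (\<forall>x\<in>carrier M. h (\<iota> x) = g x) \<and>
             (\<forall>h'. bounded_map V C BC D BD h' \<and> (\<forall>x\<in>carrier M. h' (\<iota> x) = g x) \<longrightarrow>
                   (\<forall>y\<in>carrier C. h' y = h y))))"

definition span_fin :: "('v, 'x) ring_scheme \<Rightarrow> ('v, 'm) module \<Rightarrow> 'm set \<Rightarrow> 'm set" where
  "span_fin V M F = {finsum M (\<lambda>f. c f \<odot>\<^bsub>M\<^esub> f) F | c. c \<in> F \<rightarrow> carrier V}"

definition set_plus_mod :: "('v, 'm) module \<Rightarrow> 'm set \<Rightarrow> 'm set \<Rightarrow> 'm set" where
  "set_plus_mod M A B = {a \<oplus>\<^bsub>M\<^esub> b | a b. a \<in> A \<and> b \<in> B}"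

definition compactoid :: "('v, 'x) ring_scheme \<Rightarrow> 'v \<Rightarrow> ('v, 'm) module \<Rightarrow> 'm set set \<Rightarrow> 'm set \<Rightarrow> bool" where
  "compactoid V p M B S \<longleftrightarrow>
     (\<exists>T\<in>B. submodule T V M \<and> S \<subseteq> T \<and>
        (\<forall>n::nat. \<exists>F. finite F \<and> F \<subseteq> T \<and>
            S \<subseteq> set_plus_mod M (span_fin V M F) (pi_mult V M p n T)))"

definition nuclear :: "('v, 'x) ring_scheme \<Rightarrow> 'v \<Rightarrow> ('v, 'm) module \<Rightarrow> 'm set set \<Rightarrow> bool" where
  "nuclear V p M B \<longleftrightarrow> (\<forall>S\<in>B. compactoid V p M B S)"

end

theory Submission
  imports Defs
begin

text \<open>
  The compactoid subsets of a bornological module form again a bornology, and it is complete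
  when the original one is: if \<open>S \<subseteq> V F\<^sub>n + \<pi>\<^sup>n T\<close> for all \<open>n\<close> and \<open>T'\<close> is a bounded
  \<open>\<pi>\<close>-adically complete submodule containing \<open>T\<close>, then
  \<open>T' \<inter> \<Inter>\<^sub>n (V F\<^sub>n + \<pi>\<^sup>n T')\<close> is a \<open>\<pi>\<close>-adically complete compactoid submodule containing \<open>S\<close>.
  If \<open>M\<close> is nuclear, the canonical map from \<open>M\<close> to its completion is bounded for the
  compactoid bornology of the completion, so the universal property (applied once with the
  compactoid bornology and once, for uniqueness, with the original one) shows that every
  bounded subset of the completion is compactoid.
\<close>

context abelian_group
begin

lemma a_diff_add_diff:
  assumes "a \<in> carrier G" "b \<in> carrier G" "c \<in> carrier G"
  shows "(b \<ominus> a) \<oplus> (c \<ominus> b) = c \<ominus> a"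
proof -
  have "(b \<ominus> a) \<oplus> (c \<ominus> b) = (c \<ominus> a) \<oplus> (b \<ominus> b)"
    using assms by (simp add: minus_eq a_ac)
  also have "\<dots> = c \<ominus> a"
    using assms by (simp add: minus_eq r_neg)
  finally show ?thesis .
qed

lemma a_add_diff_cancel_left:
  assumes "a \<in> carrier G" "b \<in> carrier G"
  shows "(a \<oplus> b) \<ominus> a = b"
  using assms by (metis a_closed a_comm add.inv_solve_right' minus_eq)

lemma a_diff_diff_cancel:
  assumes "a \<in> carrier G" "b \<in> carrier G"
  shows "a \<ominus> (a \<ominus> b) = b"
  using assms by (simp add: minus_eq minus_add minus_minus r_neg2)

lemma a_eq_of_diff_eq_zero:
  assumes "a \<in> carrier G" "b \<in> carrier G" "a \<ominus> b = \<zero>"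
  shows "a = b"
  using assms add.inv_solve_right'[of \<zero> a b] by (simp add: minus_eq)

end

context module
begin

lemma smult_closed_submoduleI:
  assumes "H \<subseteq> carrier M" "\<zero>\<^bsub>M\<^esub> \<in> H"
    and "\<And>a b. a \<in> H \<Longrightarrow> b \<in> H \<Longrightarrow> a \<oplus>\<^bsub>M\<^esub> b \<in> H"
    and "\<And>r a. r \<in> carrier R \<Longrightarrow> a \<in> H \<Longrightarrow> r \<odot>\<^bsub>M\<^esub> a \<in> H"
  shows "submodule H R M"
proof (rule submoduleI)
  show "\<ominus>\<^bsub>M\<^esub> a \<in> H" if "a \<in> H" for a
  proof -
    have "\<ominus>\<^bsub>M\<^esub> a = (\<ominus> \<one>) \<odot>\<^bsub>M\<^esub> a"
      using that assms(1) by (auto simp: smult_l_minus)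
    then show ?thesis
      using that assms(4) by simp
  qed
qed (use assms in auto)

lemma submodule_zero_closed: "submodule H R M \<Longrightarrow> \<zero>\<^bsub>M\<^esub> \<in> H"
  using subgroup.one_closed[OF submodule.axioms(1)] by fastforce

lemma submodule_diff_closed:
  "submodule H R M \<Longrightarrow> a \<in> H \<Longrightarrow> b \<in> H \<Longrightarrow> a \<ominus>\<^bsub>M\<^esub> b \<in> H"
  unfolding M.minus_eq by (intro submoduleE(3,5)) auto

lemma submodule_Int_INT:
  assumes "submodule T R M" "\<And>n. submodule (A n) R M"
  shows "submodule (T \<inter> (\<Inter>n. A n)) R M"
  using submoduleE(1)[OF assms(1)]
  by (intro smult_closed_submoduleI)
    (auto intro: submodule_zero_closed[OF assms(1)] submodule_zero_closed[OF assms(2)]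
      submoduleE(4,5)[OF assms(1)] submoduleE(4,5)[OF assms(2)])

lemma submodule_mem_of_diff_mem:
  assumes "submodule H R M" "a \<in> H" "b \<in> carrier M" "a \<ominus>\<^bsub>M\<^esub> b \<in> H"
  shows "b \<in> H"
  using submodule_diff_closed[OF assms(1,2,4)] M.a_diff_diff_cancel[of a b]
    submoduleE(1)[OF assms(1)] assms(2,3) by auto

end

text \<open>The operations \<open>span_fin\<close>, \<open>set_plus_mod\<close> and \<open>pi_mult\<close> take module records, not
  extensible module schemes.\<close>

locale plain_module = module R M
  for R :: "('a, 'b) ring_scheme" (structure) and M :: "('a, 'c) module" (structure)
begin

lemma finsum_smult_mem_submodule:
  assumes "finite F" "submodule N R M" "F \<subseteq> N" "c \<in> F \<rightarrow> carrier R"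
  shows "finsum M (\<lambda>f. c f \<odot>\<^bsub>M\<^esub> f) F \<in> N"
  using assms
proof (induction F rule: finite_induct)
  case empty
  then show ?case by (simp add: submodule_zero_closed)
next
  case (insert x F)
  have "F \<subseteq> carrier M" "x \<in> carrier M"
    using insert.prems submoduleE(1) by blast+
  then have "finsum M (\<lambda>f. c f \<odot>\<^bsub>M\<^esub> f) (insert x F)
      = c x \<odot>\<^bsub>M\<^esub> x \<oplus>\<^bsub>M\<^esub> finsum M (\<lambda>f. c f \<odot>\<^bsub>M\<^esub> f) F"
    using insert by (auto simp: Pi_def subsetD intro!: finsum_insert)
  then show ?case
    using insert by (auto intro!: submoduleE(4,5))
qed

lemma span_fin_subset_submodule:
  "finite F \<Longrightarrow> submodule N R M \<Longrightarrow> F \<subseteq> N \<Longrightarrow> span_fin R M F \<subseteq> N"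
  unfolding span_fin_def using finsum_smult_mem_submodule by blast

lemma submodule_span_fin:
  assumes F: "finite F" "F \<subseteq> carrier M"
  shows "submodule (span_fin R M F) R M"
proof -
  have terms: "(\<lambda>f. c f \<odot>\<^bsub>M\<^esub> f) \<in> F \<rightarrow> carrier M" if "c \<in> F \<rightarrow> carrier R" for c
    using that F by (auto simp: subsetD)
  show ?thesis
  proof (rule smult_closed_submoduleI)
    show "span_fin R M F \<subseteq> carrier M"
      by (rule span_fin_subset_submodule[OF F(1) carrier_is_submodule F(2)])
    have "finsum M (\<lambda>f. \<zero> \<odot>\<^bsub>M\<^esub> f) F = finsum M (\<lambda>f. \<zero>\<^bsub>M\<^esub>) F"
      by (rule finsum_cong') (use F in \<open>auto simp: subsetD\<close>)
    then show "\<zero>\<^bsub>M\<^esub> \<in> span_fin R M F"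
      unfolding span_fin_def by (auto intro!: exI[of _ "\<lambda>f. \<zero>"])
  next
    fix a b assume "a \<in> span_fin R M F" "b \<in> span_fin R M F"
    then obtain c d where c: "c \<in> F \<rightarrow> carrier R" "a = finsum M (\<lambda>f. c f \<odot>\<^bsub>M\<^esub> f) F"
      and d: "d \<in> F \<rightarrow> carrier R" "b = finsum M (\<lambda>f. d f \<odot>\<^bsub>M\<^esub> f) F"
      unfolding span_fin_def by auto
    have "a \<oplus>\<^bsub>M\<^esub> b = finsum M (\<lambda>f. c f \<odot>\<^bsub>M\<^esub> f \<oplus>\<^bsub>M\<^esub> d f \<odot>\<^bsub>M\<^esub> f) F"
      using c d finsum_addf[OF terms[OF c(1)] terms[OF d(1)]] by simp
    also have "\<dots> = finsum M (\<lambda>f. (c f \<oplus> d f) \<odot>\<^bsub>M\<^esub> f) F"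
      by (rule finsum_cong') (use c d F in \<open>auto simp: Pi_def subsetD smult_l_distr\<close>)
    finally show "a \<oplus>\<^bsub>M\<^esub> b \<in> span_fin R M F"
      unfolding span_fin_def using c d by (auto simp: Pi_def)
  next
    fix r a assume r: "r \<in> carrier R" and "a \<in> span_fin R M F"
    then obtain c where c: "c \<in> F \<rightarrow> carrier R" "a = finsum M (\<lambda>f. c f \<odot>\<^bsub>M\<^esub> f) F"
      unfolding span_fin_def by auto
    have "r \<odot>\<^bsub>M\<^esub> a = finsum M (\<lambda>f. r \<odot>\<^bsub>M\<^esub> (c f \<odot>\<^bsub>M\<^esub> f)) F"
      using c finsum_smult_ldistr[OF F(1) r terms[OF c(1)]] by simp
    also have "\<dots> = finsum M (\<lambda>f. (r \<otimes> c f) \<odot>\<^bsub>M\<^esub> f) F"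
      by (rule finsum_cong') (use c F r in \<open>auto simp: Pi_def subsetD smult_assoc1\<close>)
    finally show "r \<odot>\<^bsub>M\<^esub> a \<in> span_fin R M F"
      unfolding span_fin_def using c r by (auto simp: Pi_def)
  qed
qed

lemma span_fin_superset:
  assumes "finite F" "F \<subseteq> carrier M"
  shows "F \<subseteq> span_fin R M F"
proof
  fix x assume x: "x \<in> F"
  have "finsum M (\<lambda>f. (if f = x then \<one> else \<zero>) \<odot>\<^bsub>M\<^esub> f) F
      = finsum M (\<lambda>f. if x = f then f else \<zero>\<^bsub>M\<^esub>) F"
    by (rule finsum_cong') (use assms in \<open>auto simp: subsetD\<close>)
  also have "\<dots> = x"
    using finsum_singleton[of x F "\<lambda>f. f"] x assms by (auto simp: subsetD)
  finally show "x \<in> span_fin R M F"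
    unfolding span_fin_def by (auto intro!: exI[of _ "\<lambda>f. if f = x then \<one> else \<zero>"])
qed

lemma span_fin_mono:
  assumes "finite G" "G \<subseteq> carrier M" "F \<subseteq> G"
  shows "span_fin R M F \<subseteq> span_fin R M G"
  using span_fin_subset_submodule[OF finite_subset[OF assms(3,1)] submodule_span_fin[OF assms(1,2)]]
    span_fin_superset[OF assms(1,2)] assms(3) by blast

lemma submodule_set_plus_mod:
  assumes A: "submodule A R M" and B: "submodule B R M"
  shows "submodule (set_plus_mod M A B) R M"
proof (rule smult_closed_submoduleI)
  note subsets = submoduleE(1)[OF A] submoduleE(1)[OF B]
  show "set_plus_mod M A B \<subseteq> carrier M"
    unfolding set_plus_mod_def using subsets by auto
  show "\<zero>\<^bsub>M\<^esub> \<in> set_plus_mod M A B"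
    unfolding set_plus_mod_def using A B
    by (auto intro!: exI[of _ "\<zero>\<^bsub>M\<^esub>"] submodule_zero_closed)
next
  fix x y assume "x \<in> set_plus_mod M A B" "y \<in> set_plus_mod M A B"
  then obtain a b a' b' where ab: "a \<in> A" "b \<in> B" "x = a \<oplus>\<^bsub>M\<^esub> b"
    and ab': "a' \<in> A" "b' \<in> B" "y = a' \<oplus>\<^bsub>M\<^esub> b'"
    unfolding set_plus_mod_def by auto
  have "x \<oplus>\<^bsub>M\<^esub> y = (a \<oplus>\<^bsub>M\<^esub> a') \<oplus>\<^bsub>M\<^esub> (b \<oplus>\<^bsub>M\<^esub> b')"
    using ab ab' submoduleE(1)[OF A] submoduleE(1)[OF B] by (auto simp: subsetD M.a_ac)
  moreover have "a \<oplus>\<^bsub>M\<^esub> a' \<in> A" "b \<oplus>\<^bsub>M\<^esub> b' \<in> B"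
    using ab ab' submoduleE(5)[OF A] submoduleE(5)[OF B] by auto
  ultimately show "x \<oplus>\<^bsub>M\<^esub> y \<in> set_plus_mod M A B"
    unfolding set_plus_mod_def by blast
next
  fix r x assume r: "r \<in> carrier R" and "x \<in> set_plus_mod M A B"
  then obtain a b where ab: "a \<in> A" "b \<in> B" "x = a \<oplus>\<^bsub>M\<^esub> b"
    unfolding set_plus_mod_def by auto
  have "r \<odot>\<^bsub>M\<^esub> x = r \<odot>\<^bsub>M\<^esub> a \<oplus>\<^bsub>M\<^esub> r \<odot>\<^bsub>M\<^esub> b"
    using ab r submoduleE(1)[OF A] submoduleE(1)[OF B] by (auto simp: subsetD smult_r_distr)
  moreover have "r \<odot>\<^bsub>M\<^esub> a \<in> A" "r \<odot>\<^bsub>M\<^esub> b \<in> B"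
    using ab r submoduleE(4)[OF A] submoduleE(4)[OF B] by auto
  ultimately show "r \<odot>\<^bsub>M\<^esub> x \<in> set_plus_mod M A B"
    unfolding set_plus_mod_def by blast
qed

lemma subset_set_plus_mod_left:
  "\<zero>\<^bsub>M\<^esub> \<in> B \<Longrightarrow> A \<subseteq> carrier M \<Longrightarrow> A \<subseteq> set_plus_mod M A B"
  unfolding set_plus_mod_def by (force intro: exI[of _ "\<zero>\<^bsub>M\<^esub>"])

lemma subset_set_plus_mod_right:
  "\<zero>\<^bsub>M\<^esub> \<in> A \<Longrightarrow> B \<subseteq> carrier M \<Longrightarrow> B \<subseteq> set_plus_mod M A B"
  unfolding set_plus_mod_def by (force intro: exI[of _ "\<zero>\<^bsub>M\<^esub>"])

end

lemma set_plus_mod_mono: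
  "A \<subseteq> A' \<Longrightarrow> B \<subseteq> B' \<Longrightarrow> set_plus_mod M A B \<subseteq> set_plus_mod M A' B'"
  unfolding set_plus_mod_def by blast

lemma submodule_vimage_linear_map:
  assumes "module V M" "module V C" "linear_map V M C f" and N: "submodule N V C"
  shows "submodule {x \<in> carrier M. f x \<in> N} V M"
proof -
  interpret M: module V M by fact
  interpret C: module V C by fact
  have f: "\<And>x. x \<in> carrier M \<Longrightarrow> f x \<in> carrier C"
    "\<And>x y. x \<in> carrier M \<Longrightarrow> y \<in> carrier M \<Longrightarrow> f (x \<oplus>\<^bsub>M\<^esub> y) = f x \<oplus>\<^bsub>C\<^esub> f y"
    "\<And>a x. a \<in> carrier V \<Longrightarrow> x \<in> carrier M \<Longrightarrow> f (a \<odot>\<^bsub>M\<^esub> x) = a \<odot>\<^bsub>C\<^esub> f x"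
    using assms(3) unfolding linear_map_def by auto
  show ?thesis
  proof (rule M.smult_closed_submoduleI)
    have "f \<zero>\<^bsub>M\<^esub> = \<zero>\<^bsub>V\<^esub> \<odot>\<^bsub>C\<^esub> f \<zero>\<^bsub>M\<^esub>"
      using f(3)[of "\<zero>\<^bsub>V\<^esub>" "\<zero>\<^bsub>M\<^esub>"] by simp
    then show "\<zero>\<^bsub>M\<^esub> \<in> {x \<in> carrier M. f x \<in> N}"
      using f(1) C.submodule_zero_closed[OF N] by simp
  qed (use f C.submoduleE(4,5)[OF N] in auto)
qed

lemma linear_map_span_fin_image:
  assumes M: "module V M" and C: "module V C" and f: "linear_map V M C f"
    and F: "finite F" "F \<subseteq> carrier M"
  shows "f ` span_fin V M F \<subseteq> span_fin V C (f ` F)"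
proof -
  interpret M: plain_module V M by (rule plain_module.intro) fact
  interpret C: plain_module V C by (rule plain_module.intro) fact
  have fF: "finite (f ` F)" "f ` F \<subseteq> carrier C"
    using F f unfolding linear_map_def by auto
  have "span_fin V M F \<subseteq> {x \<in> carrier M. f x \<in> span_fin V C (f ` F)}"
  proof (rule M.span_fin_subset_submodule[OF F(1)])
    show "submodule {x \<in> carrier M. f x \<in> span_fin V C (f ` F)} V M"
      by (rule submodule_vimage_linear_map[OF M C f C.submodule_span_fin[OF fF]])
    show "F \<subseteq> {x \<in> carrier M. f x \<in> span_fin V C (f ` F)}"
      using F(2) C.span_fin_superset[OF fF] by blast
  qed
  then show ?thesis by blast
qed

locale pi_module = plain_module +
  fixes p :: 'a
  assumes p_closed: "p \<in> carrier R"
begin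

abbreviation pi_pow :: "nat \<Rightarrow> 'a" where
  "pi_pow n \<equiv> p [^]\<^bsub>R\<^esub> n"

lemma pi_pow_closed [simp]: "pi_pow n \<in> carrier R"
  using p_closed by simp

lemma pi_pow_smult_pi_pow:
  "x \<in> carrier M \<Longrightarrow> pi_pow m \<odot>\<^bsub>M\<^esub> (pi_pow n \<odot>\<^bsub>M\<^esub> x) = pi_pow (m + n) \<odot>\<^bsub>M\<^esub> x"
  by (simp add: smult_assoc1[symmetric] R.nat_pow_mult p_closed)

lemma pi_mult_memI: "t \<in> T \<Longrightarrow> pi_pow n \<odot>\<^bsub>M\<^esub> t \<in> pi_mult R M p n T"
  unfolding pi_mult_def by auto

lemma pi_mult_mono: "T \<subseteq> T' \<Longrightarrow> pi_mult R M p n T \<subseteq> pi_mult R M p n T'"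
  unfolding pi_mult_def by auto

lemma submodule_pi_mult:
  assumes T: "submodule T R M"
  shows "submodule (pi_mult R M p n T) R M"
proof (rule smult_closed_submoduleI)
  show "pi_mult R M p n T \<subseteq> carrier M"
    unfolding pi_mult_def using submoduleE(1)[OF T] by auto
  show "\<zero>\<^bsub>M\<^esub> \<in> pi_mult R M p n T"
    using pi_mult_memI[OF submodule_zero_closed[OF T], of n] by simp
next
  fix a b assume "a \<in> pi_mult R M p n T" "b \<in> pi_mult R M p n T"
  then obtain t u where "t \<in> T" "u \<in> T" "a = pi_pow n \<odot>\<^bsub>M\<^esub> t" "b = pi_pow n \<odot>\<^bsub>M\<^esub> u"
    unfolding pi_mult_def by auto
  moreover have "pi_pow n \<odot>\<^bsub>M\<^esub> t \<oplus>\<^bsub>M\<^esub> pi_pow n \<odot>\<^bsub>M\<^esub> u = pi_pow n \<odot>\<^bsub>M\<^esub> (t \<oplus>\<^bsub>M\<^esub> u)"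
    using calculation(1,2) submoduleE(1)[OF T] by (auto simp: subsetD smult_r_distr)
  ultimately show "a \<oplus>\<^bsub>M\<^esub> b \<in> pi_mult R M p n T"
    using pi_mult_memI submoduleE(5)[OF T] by auto
next
  fix r a assume r: "r \<in> carrier R" and "a \<in> pi_mult R M p n T"
  then obtain t where t: "t \<in> T" "a = pi_pow n \<odot>\<^bsub>M\<^esub> t"
    unfolding pi_mult_def by auto
  have "r \<odot>\<^bsub>M\<^esub> a = pi_pow n \<odot>\<^bsub>M\<^esub> (r \<odot>\<^bsub>M\<^esub> t)"
    using t r submoduleE(1)[OF T] by (auto simp: subsetD smult_assoc1[symmetric] R.m_comm)
  then show "r \<odot>\<^bsub>M\<^esub> a \<in> pi_mult R M p n T"
    using pi_mult_memI submoduleE(4)[OF T] t r by auto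
qed

lemma smult_pi_mult:
  assumes "submodule T R M" "x \<in> pi_mult R M p n T"
  shows "pi_pow m \<odot>\<^bsub>M\<^esub> x \<in> pi_mult R M p (m + n) T"
proof -
  obtain t where "t \<in> T" "x = pi_pow n \<odot>\<^bsub>M\<^esub> t"
    using assms(2) unfolding pi_mult_def by auto
  then show ?thesis
    using pi_pow_smult_pi_pow pi_mult_memI submoduleE(1)[OF assms(1)] by auto
qed

lemma pi_mult_antimono:
  assumes "submodule T R M" "m \<le> n"
  shows "pi_mult R M p n T \<subseteq> pi_mult R M p m T"
proof
  fix x assume "x \<in> pi_mult R M p n T"
  then obtain t where t: "t \<in> T" "x = pi_pow n \<odot>\<^bsub>M\<^esub> t"
    unfolding pi_mult_def by auto
  then have "x = pi_pow m \<odot>\<^bsub>M\<^esub> (pi_pow (n - m) \<odot>\<^bsub>M\<^esub> t)"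
    using pi_pow_smult_pi_pow[of t m "n - m"] assms submoduleE(1)[OF assms(1)] by auto
  then show "x \<in> pi_mult R M p m T"
    using pi_mult_memI submoduleE(4)[OF assms(1)] t(1) by auto
qed

lemma eq_if_diff_in_all_pi_mult:
  assumes "(\<Inter>n. pi_mult R M p n T) = {\<zero>\<^bsub>M\<^esub>}" "a \<in> carrier M" "b \<in> carrier M"
    and "\<And>n. a \<ominus>\<^bsub>M\<^esub> b \<in> pi_mult R M p n T"
  shows "a = b"
  using M.a_eq_of_diff_eq_zero[OF assms(2,3)] assms(1,4) by blast

end

lemma pi_moduleI:
  assumes "module R M" "p \<in> carrier R"
  shows "pi_module R M p"
proof -
  interpret module R M by fact
  show ?thesis by unfold_locales (rule assms(2))
qed

text \<open>\<open>pi_partial_sum R M p k m j = (\<Sum>i<j. \<pi>\<^sup>i k (m + i))\<close>: partial sums of the tail of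
  \<open>\<Sum>i. \<pi>\<^sup>i k i\<close> from index \<open>m\<close> on, divided by \<open>\<pi>\<^sup>m\<close>.\<close>

primrec pi_partial_sum ::
  "('a, 'b) ring_scheme \<Rightarrow> ('a, 'c) module \<Rightarrow> 'a \<Rightarrow> (nat \<Rightarrow> 'c) \<Rightarrow> nat \<Rightarrow> nat \<Rightarrow> 'c" where
  "pi_partial_sum R M p k m 0 = \<zero>\<^bsub>M\<^esub>"
| "pi_partial_sum R M p k m (Suc j) =
     pi_partial_sum R M p k m j \<oplus>\<^bsub>M\<^esub> (p [^]\<^bsub>R\<^esub> j) \<odot>\<^bsub>M\<^esub> k (m + j)"

context pi_module
begin

lemma pi_partial_sum_mem:
  assumes "submodule N R M" "\<And>n. k n \<in> N"
  shows "pi_partial_sum R M p k m j \<in> N"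
  by (induction j) (simp_all add: assms submodule_zero_closed submoduleE(4,5)[OF assms(1)])

lemma pi_partial_sum_Suc_diff:
  assumes "\<And>n. k n \<in> carrier M"
  shows "pi_partial_sum R M p k m (Suc j) \<ominus>\<^bsub>M\<^esub> pi_partial_sum R M p k m j = pi_pow j \<odot>\<^bsub>M\<^esub> k (m + j)"
  using M.a_add_diff_cancel_left pi_partial_sum_mem[OF carrier_is_submodule] assms by simp

lemma pi_partial_sum_telescope:
  assumes x: "\<And>n. x n \<in> carrier M" "\<And>n. x (Suc n) \<ominus>\<^bsub>M\<^esub> x n = pi_pow n \<odot>\<^bsub>M\<^esub> k n"
    and k: "\<And>n. k n \<in> carrier M"
  shows "pi_pow m \<odot>\<^bsub>M\<^esub> pi_partial_sum R M p k m j = x (m + j) \<ominus>\<^bsub>M\<^esub> x m"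
proof (induction j)
  case 0
  then show ?case using x(1) by (simp add: M.minus_eq M.r_neg)
next
  case (Suc j)
  have "pi_pow m \<odot>\<^bsub>M\<^esub> pi_partial_sum R M p k m (Suc j)
      = pi_pow m \<odot>\<^bsub>M\<^esub> pi_partial_sum R M p k m j \<oplus>\<^bsub>M\<^esub> pi_pow m \<odot>\<^bsub>M\<^esub> (pi_pow j \<odot>\<^bsub>M\<^esub> k (m + j))"
    using pi_partial_sum_mem[OF carrier_is_submodule] k by (simp add: smult_r_distr)
  also have "\<dots> = (x (m + j) \<ominus>\<^bsub>M\<^esub> x m) \<oplus>\<^bsub>M\<^esub> (x (Suc (m + j)) \<ominus>\<^bsub>M\<^esub> x (m + j))"
    using Suc pi_pow_smult_pi_pow[OF k] x(2) by simp
  also have "\<dots> = x (m + Suc j) \<ominus>\<^bsub>M\<^esub> x m"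
    using M.a_diff_add_diff x(1) by simp
  finally show ?case .
qed

text \<open>As \<open>\<pi>\<close> may have torsion on \<open>T\<close>, \<open>x\<^sub>m - y \<in> \<pi>\<^sup>m T\<close> alone does not give a preimage of
  \<open>x\<^sub>m - y\<close> in a given submodule; separatedness identifies it with \<open>\<pi>\<^sup>m\<close> times the limit
  of the tail sums, which the completeness proof below places in that submodule.\<close>

lemma tail_eq_pi_pow_smult_limit:
  assumes T: "submodule T R M" "(\<Inter>n. pi_mult R M p n T) = {\<zero>\<^bsub>M\<^esub>}"
    and x: "\<And>n. x n \<in> carrier M" "\<And>n. x (Suc n) \<ominus>\<^bsub>M\<^esub> x n = pi_pow n \<odot>\<^bsub>M\<^esub> k n"
    and k: "\<And>n. k n \<in> carrier M"
    and y: "y \<in> carrier M" "\<And>n. x n \<ominus>\<^bsub>M\<^esub> y \<in> pi_mult R M p n T"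
    and z: "z \<in> carrier M" "\<And>j. pi_partial_sum R M p k m j \<ominus>\<^bsub>M\<^esub> z \<in> pi_mult R M p j T"
  shows "x m \<ominus>\<^bsub>M\<^esub> y = pi_pow m \<odot>\<^bsub>M\<^esub> (\<ominus>\<^bsub>M\<^esub> z)"
proof (rule eq_if_diff_in_all_pi_mult[OF T(2)])
  fix n
  let ?s = "pi_partial_sum R M p k m n"
  have s: "?s \<in> carrier M"
    using pi_partial_sum_mem[OF carrier_is_submodule] k by blast
  have tail: "pi_pow m \<odot>\<^bsub>M\<^esub> (?s \<ominus>\<^bsub>M\<^esub> z) = (x (m + n) \<ominus>\<^bsub>M\<^esub> x m) \<ominus>\<^bsub>M\<^esub> pi_pow m \<odot>\<^bsub>M\<^esub> z"
    using pi_partial_sum_telescope[OF x k] s z(1)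
    by (simp add: M.minus_eq smult_r_distr smult_r_minus)
  have "(x m \<ominus>\<^bsub>M\<^esub> y) \<ominus>\<^bsub>M\<^esub> pi_pow m \<odot>\<^bsub>M\<^esub> (\<ominus>\<^bsub>M\<^esub> z)
      = (x (m + n) \<ominus>\<^bsub>M\<^esub> y) \<ominus>\<^bsub>M\<^esub> pi_pow m \<odot>\<^bsub>M\<^esub> (?s \<ominus>\<^bsub>M\<^esub> z)"
    unfolding tail using x(1) y(1) z(1)
    by (simp add: smult_r_minus M.minus_eq M.minus_add M.minus_minus M.a_ac
        M.r_neg M.r_neg1 M.r_neg2 M.l_neg)
  also have "\<dots> \<in> pi_mult R M p (m + n) T"
    using submodule_diff_closed[OF submodule_pi_mult[OF T(1)] y(2) smult_pi_mult[OF T(1) z(2)]] .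
  also have "\<dots> \<subseteq> pi_mult R M p n T"
    using pi_mult_antimono[OF T(1)] by simp
  finally show "(x m \<ominus>\<^bsub>M\<^esub> y) \<ominus>\<^bsub>M\<^esub> pi_pow m \<odot>\<^bsub>M\<^esub> (\<ominus>\<^bsub>M\<^esub> z) \<in> pi_mult R M p n T" .
qed (use x(1) y(1) z(1) in simp_all)

lemma pi_partial_sum_converges:
  assumes T: "submodule T R M" "padic_complete R M p T" and k: "\<And>n. k n \<in> T"
  shows "\<exists>z\<in>T. \<forall>j. pi_partial_sum R M p k m j \<ominus>\<^bsub>M\<^esub> z \<in> pi_mult R M p j T"
proof -
  let ?s = "pi_partial_sum R M p k m"
  have "\<And>n. k n \<in> carrier M"
    using k submoduleE(1)[OF T(1)] by blast
  then have "\<forall>j. ?s (Suc j) \<ominus>\<^bsub>M\<^esub> ?s j \<in> pi_mult R M p j T"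
    using pi_partial_sum_Suc_diff pi_mult_memI[OF k] by simp
  moreover have "\<forall>j. ?s j \<in> T"
    using pi_partial_sum_mem[OF T(1)] k by blast
  ultimately show ?thesis
    using T(2) unfolding padic_complete_def by blast
qed

lemma separated_subset:
  assumes "(\<Inter>n. pi_mult R M p n T) = {\<zero>\<^bsub>M\<^esub>}" "K \<subseteq> T" "\<zero>\<^bsub>M\<^esub> \<in> K"
  shows "(\<Inter>n. pi_mult R M p n K) = {\<zero>\<^bsub>M\<^esub>}"
proof -
  have "(\<Inter>n. pi_mult R M p n K) \<subseteq> (\<Inter>n. pi_mult R M p n T)"
    using pi_mult_mono[OF assms(2)] by blast
  then show ?thesis
    using assms(1) pi_mult_memI[OF assms(3)] by auto
qed

lemma padic_limit_mem_Int:
  assumes A: "\<And>n. submodule (A n) R M" "\<And>n. pi_mult R M p n T \<subseteq> A n" and T: "T \<subseteq> carrier M"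
    and s: "\<And>n. s n \<in> T \<inter> (\<Inter>n. A n)"
    and z: "z \<in> T" "\<And>n. s n \<ominus>\<^bsub>M\<^esub> z \<in> pi_mult R M p n T"
  shows "z \<in> T \<inter> (\<Inter>n. A n)"
proof -
  have "z \<in> A n" for n
  proof (rule submodule_mem_of_diff_mem[OF A(1)])
    show "s n \<in> A n"
      using s by blast
    show "z \<in> carrier M"
      using z(1) T by blast
    show "s n \<ominus>\<^bsub>M\<^esub> z \<in> A n"
      using z(2) A(2) by blast
  qed
  then show ?thesis
    using z(1) by blast
qed

lemma padic_complete_Int:
  assumes T: "submodule T R M" "padic_complete R M p T"
    and A: "\<And>n. submodule (A n) R M" "\<And>n. pi_mult R M p n T \<subseteq> A n"
  shows "padic_complete R M p (T \<inter> (\<Inter>n. A n))"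
proof -
  define K where "K = T \<inter> (\<Inter>n. A n)"
  have "submodule K R M"
    unfolding K_def by (rule submodule_Int_INT[OF T(1) A(1)])
  then have K_zero: "\<zero>\<^bsub>M\<^esub> \<in> K" and K_neg: "\<And>a. a \<in> K \<Longrightarrow> \<ominus>\<^bsub>M\<^esub> a \<in> K"
    using submodule_zero_closed submoduleE(3) by blast+
  have KT: "K \<subseteq> T" and T_carrier: "T \<subseteq> carrier M"
    unfolding K_def using submoduleE(1)[OF T(1)] by auto
  have sep: "(\<Inter>n. pi_mult R M p n T) = {\<zero>\<^bsub>M\<^esub>}"
    and lim: "\<And>x. (\<forall>n. x n \<in> T) \<Longrightarrow> (\<forall>n. x (Suc n) \<ominus>\<^bsub>M\<^esub> x n \<in> pi_mult R M p n T) \<Longrightarrow>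
        \<exists>y\<in>T. \<forall>n. x n \<ominus>\<^bsub>M\<^esub> y \<in> pi_mult R M p n T"
    using T(2) unfolding padic_complete_def by blast+
  have limit_in_K: "z \<in> K"
    if "\<And>n. s n \<in> K" "z \<in> T" "\<And>n. s n \<ominus>\<^bsub>M\<^esub> z \<in> pi_mult R M p n T" for s z
    using padic_limit_mem_Int[OF A T_carrier that[unfolded K_def]] unfolding K_def .
  show ?thesis
    unfolding padic_complete_def K_def[symmetric]
  proof (intro conjI allI impI)
    show "(\<Inter>n. pi_mult R M p n K) = {\<zero>\<^bsub>M\<^esub>}"
      by (rule separated_subset[OF sep KT K_zero])
    fix x assume "(\<forall>n. x n \<in> K) \<and> (\<forall>n. x (Suc n) \<ominus>\<^bsub>M\<^esub> x n \<in> pi_mult R M p n K)"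
    then have xK: "\<And>n. x n \<in> K" and "\<forall>n. \<exists>k \<in> K. x (Suc n) \<ominus>\<^bsub>M\<^esub> x n = pi_pow n \<odot>\<^bsub>M\<^esub> k"
      unfolding pi_mult_def by auto
    then obtain k where k: "\<And>n. k n \<in> K" "\<And>n. x (Suc n) \<ominus>\<^bsub>M\<^esub> x n = pi_pow n \<odot>\<^bsub>M\<^esub> k n"
      by metis
    have xT: "\<And>n. x n \<in> T" and kT: "\<And>n. k n \<in> T"
      using xK k(1) KT by blast+
    obtain y where y: "y \<in> T" "\<And>n. x n \<ominus>\<^bsub>M\<^esub> y \<in> pi_mult R M p n T"
      using lim[of x] xT k(2) pi_mult_memI[OF kT] by auto
    have "\<forall>m. \<exists>z. z \<in> T \<and> (\<forall>j. pi_partial_sum R M p k m j \<ominus>\<^bsub>M\<^esub> z \<in> pi_mult R M p j T)"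
      using pi_partial_sum_converges[where k = k, OF T kT] by blast
    from choice[OF this] obtain z where z: "\<And>m. z m \<in> T"
      "\<And>m j. pi_partial_sum R M p k m j \<ominus>\<^bsub>M\<^esub> z m \<in> pi_mult R M p j T"
      by blast
    have "x m \<ominus>\<^bsub>M\<^esub> y \<in> pi_mult R M p m K" for m
    proof -
      have "pi_partial_sum R M p k m j \<in> K" for j
        using pi_partial_sum_mem[OF \<open>submodule K R M\<close>] k(1) by blast
      then have "z m \<in> K"
        using limit_in_K z by blast
      moreover have "x m \<ominus>\<^bsub>M\<^esub> y = pi_pow m \<odot>\<^bsub>M\<^esub> (\<ominus>\<^bsub>M\<^esub> z m)"
        by (rule tail_eq_pi_pow_smult_limit[OF T(1) sep _ k(2) _ _ y(2) _ z(2)])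
          (use xT kT y(1) z(1) T_carrier in auto)
      ultimately show ?thesis
        using pi_mult_memI K_neg by auto
    qed
    moreover have "y \<in> K"
      using limit_in_K[OF xK y] .
    ultimately show "\<exists>y\<in>K. \<forall>n. x n \<ominus>\<^bsub>M\<^esub> y \<in> pi_mult R M p n K"
      by blast
  qed
qed

end

lemma bornological_moduleD:
  assumes "bornological_module V M B"
  shows "module V M"
    and "S \<in> B \<Longrightarrow> S \<subseteq> carrier M"
    and "finite S \<Longrightarrow> S \<subseteq> carrier M \<Longrightarrow> S \<in> B"
    and "S \<in> B \<Longrightarrow> S' \<in> B \<Longrightarrow> S \<union> S' \<in> B"
    and "S \<in> B \<Longrightarrow> S' \<subseteq> S \<Longrightarrow> S' \<in> B"
    and "S \<in> B \<Longrightarrow> \<exists>T\<in>B. submodule T V M \<and> S \<subseteq> T"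
proof -
  note def = assms[unfolded bornological_module_def]
  have sub: "\<forall>S\<in>B. S \<subseteq> carrier M" using def by (elim conjE) assumption
  have fin: "\<forall>S. finite S \<and> S \<subseteq> carrier M \<longrightarrow> S \<in> B" using def by (elim conjE) assumption
  have union: "\<forall>S\<in>B. \<forall>T\<in>B. S \<union> T \<in> B" using def by (elim conjE) assumption
  have down: "\<forall>S\<in>B. \<forall>T. T \<subseteq> S \<longrightarrow> T \<in> B" using def by (elim conjE) assumption
  have hull: "\<forall>S\<in>B. \<exists>T\<in>B. submodule T V M \<and> S \<subseteq> T" using def by (elim conjE) assumption
  show "module V M" using def by (elim conjE) assumption
  show "S \<in> B \<Longrightarrow> S \<subseteq> carrier M" using sub by blast
  show "finite S \<Longrightarrow> S \<subseteq> carrier M \<Longrightarrow> S \<in> B" using fin by blast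
  show "S \<in> B \<Longrightarrow> S' \<in> B \<Longrightarrow> S \<union> S' \<in> B" using union by blast
  show "S \<in> B \<Longrightarrow> S' \<subseteq> S \<Longrightarrow> S' \<in> B" using down by blast
  show "S \<in> B \<Longrightarrow> \<exists>T\<in>B. submodule T V M \<and> S \<subseteq> T" using hull by blast
qed

lemma compactoidI:
  assumes "T \<in> B" "submodule T V M" "S \<subseteq> T" "\<And>n. finite (F n)" "\<And>n. F n \<subseteq> T"
    "\<And>n. S \<subseteq> set_plus_mod M (span_fin V M (F n)) (pi_mult V M p n T)"
  shows "compactoid V p M B S"
  unfolding compactoid_def
proof (intro bexI[of _ T] conjI allI)
  fix n
  show "\<exists>F. finite F \<and> F \<subseteq> T \<and> S \<subseteq> set_plus_mod M (span_fin V M F) (pi_mult V M p n T)"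
    by (rule exI[of _ "F n"]) (simp add: assms(4-6))
qed (simp_all add: assms(1-3))

lemma compactoidE:
  assumes "compactoid V p M B S"
  obtains T F where "T \<in> B" "submodule T V M" "S \<subseteq> T" "\<And>n. finite (F n)" "\<And>n. F n \<subseteq> T"
    "\<And>n. S \<subseteq> set_plus_mod M (span_fin V M (F n)) (pi_mult V M p n T)"
proof -
  obtain T where "T \<in> B" "submodule T V M" "S \<subseteq> T"
    "\<forall>n. \<exists>F. finite F \<and> F \<subseteq> T \<and> S \<subseteq> set_plus_mod M (span_fin V M F) (pi_mult V M p n T)"
    using assms unfolding compactoid_def by blast
  then show ?thesis using that by metis
qed

lemma compactoid_subset: "compactoid V p M B S \<Longrightarrow> S' \<subseteq> S \<Longrightarrow> compactoid V p M B S'"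
  unfolding compactoid_def by (meson subset_trans)

lemma compactoid_imp_bounded: "bornological_module V M B \<Longrightarrow> compactoid V p M B S \<Longrightarrow> S \<in> B"
  by (meson bornological_moduleD(5) compactoidE)

definition compactoid_hull ::
  "('v, 'x) ring_scheme \<Rightarrow> ('v, 'm) module \<Rightarrow> 'v \<Rightarrow> (nat \<Rightarrow> 'm set) \<Rightarrow> 'm set \<Rightarrow> 'm set" where
  "compactoid_hull V M p F T = T \<inter> (\<Inter>n. set_plus_mod M (span_fin V M (F n)) (pi_mult V M p n T))"

lemma compactoid_compactoid_hull:
  assumes "T \<in> B" "submodule T V M" "\<And>n. finite (F n)" "\<And>n. F n \<subseteq> T"
  shows "compactoid V p M B (compactoid_hull V M p F T)"
  by (rule compactoidI[OF assms(1,2) _ assms(3,4)]) (auto simp: compactoid_hull_def)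

context pi_module
begin

lemma subset_compactoid_hull:
  assumes "S \<subseteq> T" "T0 \<subseteq> T"
    and "\<And>n. S \<subseteq> set_plus_mod M (span_fin R M (F n)) (pi_mult R M p n T0)"
  shows "S \<subseteq> compactoid_hull R M p F T"
  unfolding compactoid_hull_def
  using assms set_plus_mod_mono[OF order_refl pi_mult_mono[OF assms(2)]] by blast

lemma submodule_approximation:
  assumes "submodule T R M" "finite F" "F \<subseteq> T"
  shows "submodule (set_plus_mod M (span_fin R M F) (pi_mult R M p n T)) R M"
  using assms submoduleE(1)[OF assms(1)]
  by (blast intro: submodule_set_plus_mod submodule_span_fin submodule_pi_mult)

lemma approximation_mono:
  assumes "finite G" "G \<subseteq> carrier M" "F \<subseteq> G" "T \<subseteq> U"
  shows "set_plus_mod M (span_fin R M F) (pi_mult R M p n T)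
    \<subseteq> set_plus_mod M (span_fin R M G) (pi_mult R M p n U)"
  by (intro set_plus_mod_mono span_fin_mono[OF assms(1-3)] pi_mult_mono[OF assms(4)])

lemma submodule_compactoid_hull:
  assumes T: "submodule T R M" and F: "\<And>n. finite (F n)" "\<And>n. F n \<subseteq> T"
  shows "submodule (compactoid_hull R M p F T) R M"
  unfolding compactoid_hull_def by (rule submodule_Int_INT[OF T submodule_approximation[OF T F]])

lemma padic_complete_compactoid_hull:
  assumes T: "submodule T R M" "padic_complete R M p T"
    and F: "\<And>n. finite (F n)" "\<And>n. F n \<subseteq> T"
  shows "padic_complete R M p (compactoid_hull R M p F T)"
  unfolding compactoid_hull_def
proof (rule padic_complete_Int[OF T submodule_approximation[OF T(1) F]])
  fix n
  have "F n \<subseteq> carrier M"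
    using F(2) submoduleE(1)[OF T(1)] by blast
  then show "pi_mult R M p n T \<subseteq> set_plus_mod M (span_fin R M (F n)) (pi_mult R M p n T)"
    by (intro subset_set_plus_mod_right submodule_zero_closed submodule_span_fin F(1)
        submoduleE(1)[OF submodule_pi_mult[OF T(1)]])
qed

lemma compactoid_finite:
  assumes B: "bornological_module R M B" and S: "finite S" "S \<subseteq> carrier M"
  shows "compactoid R p M B S"
proof -
  obtain T where T: "T \<in> B" "submodule T R M" "S \<subseteq> T"
    using bornological_moduleD(6)[OF B bornological_moduleD(3)[OF B S]] by blast
  have "S \<subseteq> set_plus_mod M (span_fin R M S) (pi_mult R M p n T)" for n
  proof -
    have "S \<subseteq> span_fin R M S"
      by (rule span_fin_superset[OF S])
    also have "\<dots> \<subseteq> set_plus_mod M (span_fin R M S) (pi_mult R M p n T)"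
      by (intro subset_set_plus_mod_left submodule_zero_closed submodule_pi_mult T(2)
          submoduleE(1)[OF submodule_span_fin[OF S]])
    finally show ?thesis .
  qed
  then show ?thesis
    using T S(1) by (intro compactoidI[where F = "\<lambda>n. S"]) auto
qed

lemma compactoid_Un:
  assumes B: "bornological_module R M B"
    and S: "compactoid R p M B S" and S': "compactoid R p M B S'"
  shows "compactoid R p M B (S \<union> S')"
proof -
  obtain T F where T: "T \<in> B" "submodule T R M" "S \<subseteq> T" and F: "\<And>n. finite (F n)" "\<And>n. F n \<subseteq> T"
    "\<And>n. S \<subseteq> set_plus_mod M (span_fin R M (F n)) (pi_mult R M p n T)"
    using S by (rule compactoidE) blast
  obtain T' F' where T': "T' \<in> B" "submodule T' R M" "S' \<subseteq> T'" and F': "\<And>n. finite (F' n)" "\<And>n. F' n \<subseteq> T'"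
    "\<And>n. S' \<subseteq> set_plus_mod M (span_fin R M (F' n)) (pi_mult R M p n T')"
    using S' by (rule compactoidE) blast
  obtain U where U: "U \<in> B" "submodule U R M" "T \<union> T' \<subseteq> U"
    using bornological_moduleD(6)[OF B bornological_moduleD(4)[OF B T(1) T'(1)]] by blast
  have G: "finite (F n \<union> F' n)" "F n \<union> F' n \<subseteq> U" "F n \<union> F' n \<subseteq> carrier M" for n
  proof -
    show "finite (F n \<union> F' n)"
      using F(1) F'(1) by simp
    show "F n \<union> F' n \<subseteq> U"
      using F(2) F'(2) U(3) by blast
    then show "F n \<union> F' n \<subseteq> carrier M"
      using submoduleE(1)[OF U(2)] by blast
  qed
  have "T \<subseteq> U" "T' \<subseteq> U"
    using U(3) by auto
  have "S \<union> S' \<subseteq> set_plus_mod M (span_fin R M (F n \<union> F' n)) (pi_mult R M p n U)" for n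
  proof (rule Un_least)
    show "S \<subseteq> set_plus_mod M (span_fin R M (F n \<union> F' n)) (pi_mult R M p n U)"
      using F(3) approximation_mono[OF G(1,3) Un_upper1 \<open>T \<subseteq> U\<close>] by (rule subset_trans)
    show "S' \<subseteq> set_plus_mod M (span_fin R M (F n \<union> F' n)) (pi_mult R M p n U)"
      using F'(3) approximation_mono[OF G(1,3) Un_upper2 \<open>T' \<subseteq> U\<close>] by (rule subset_trans)
  qed
  then show ?thesis
    using T(3) T'(3) U(3)
    by (intro compactoidI[where F = "\<lambda>n. F n \<union> F' n", OF U(1,2) _ G(1,2)]) auto
qed

lemma bornological_module_compactoids:
  assumes B: "bornological_module R M B"
  shows "bornological_module R M {S. compactoid R p M B S}"
  unfolding bornological_module_def
proof (intro conjI ballI allI impI; (unfold mem_Collect_eq)?)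
  show "module R M" by (rule bornological_moduleD(1)[OF B])
  show "S \<subseteq> carrier M" if "compactoid R p M B S" for S
    using bornological_moduleD(2)[OF B compactoid_imp_bounded[OF B that]] .
  show "compactoid R p M B S" if "finite S \<and> S \<subseteq> carrier M" for S
    using compactoid_finite[OF B] that by blast
  show "compactoid R p M B (S \<union> S')" if "compactoid R p M B S" "compactoid R p M B S'" for S S'
    using compactoid_Un[OF B that] .
  show "compactoid R p M B S'" if "compactoid R p M B S" "S' \<subseteq> S" for S S'
    by (rule compactoid_subset[OF that])
  show "\<exists>T\<in>{S. compactoid R p M B S}. submodule T R M \<and> S \<subseteq> T" if S: "compactoid R p M B S" for S
  proof -
    obtain T F where T: "T \<in> B" "submodule T R M" "S \<subseteq> T" and F: "\<And>n. finite (F n)" "\<And>n. F n \<subseteq> T"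
      "\<And>n. S \<subseteq> set_plus_mod M (span_fin R M (F n)) (pi_mult R M p n T)"
      using S by (rule compactoidE) blast
    show ?thesis
    proof (rule bexI)
      show "compactoid_hull R M p F T \<in> {S. compactoid R p M B S}"
        using compactoid_compactoid_hull[OF T(1,2) F(1,2)] by simp
      show "submodule (compactoid_hull R M p F T) R M \<and> S \<subseteq> compactoid_hull R M p F T"
        using submodule_compactoid_hull[OF T(2) F(1,2)] subset_compactoid_hull[OF T(3) order_refl F(3)]
        by simp
    qed
  qed
qed

lemma complete_born_compactoids:
  assumes B: "bornological_module R M B" and complete: "complete_born R p M B"
  shows "complete_born R p M {S. compactoid R p M B S}"
  unfolding complete_born_def
proof (intro ballI; (unfold mem_Collect_eq)?)
  fix S assume "compactoid R p M B S"
  then obtain T F where T: "T \<in> B" "S \<subseteq> T" and F: "\<And>n. finite (F n)" "\<And>n. F n \<subseteq> T"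
    "\<And>n. S \<subseteq> set_plus_mod M (span_fin R M (F n)) (pi_mult R M p n T)"
    by (rule compactoidE) blast
  obtain T' where T': "T' \<in> B" "submodule T' R M" "T \<subseteq> T'" "padic_complete R M p T'"
    using complete T(1) unfolding complete_born_def by blast
  have F': "\<And>n. F n \<subseteq> T'" and "S \<subseteq> T'"
    using F(2) T(2) T'(3) by blast+
  show "\<exists>K\<in>{S. compactoid R p M B S}. submodule K R M \<and> S \<subseteq> K \<and> padic_complete R M p K"
  proof (rule bexI)
    show "compactoid_hull R M p F T' \<in> {S. compactoid R p M B S}"
      using compactoid_compactoid_hull[OF T'(1,2) F(1) F'] by simp
    show "submodule (compactoid_hull R M p F T') R M \<and> S \<subseteq> compactoid_hull R M p F T' \<and>
        padic_complete R M p (compactoid_hull R M p F T')"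
      using submodule_compactoid_hull[OF T'(2) F(1) F'] subset_compactoid_hull[OF \<open>S \<subseteq> T'\<close> T'(3) F(3)]
        padic_complete_compactoid_hull[OF T'(2,4) F(1) F'] by simp
  qed
qed

end

lemma linear_map_image_approximation:
  assumes p: "p \<in> carrier V" and modules: "module V M" "module V C" and f: "linear_map V M C f"
    and F: "finite F" "F \<subseteq> carrier M" and T0: "T0 \<subseteq> carrier M" "f ` T0 \<subseteq> T"
  shows "f ` set_plus_mod M (span_fin V M F) (pi_mult V M p n T0)
    \<subseteq> set_plus_mod C (span_fin V C (f ` F)) (pi_mult V C p n T)"
proof
  interpret M: pi_module V M p
    using modules(1) p by (rule pi_moduleI)
  interpret C: pi_module V C p
    using modules(2) p by (rule pi_moduleI)
  fix y assume "y \<in> f ` set_plus_mod M (span_fin V M F) (pi_mult V M p n T0)"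
  then obtain x where x: "x \<in> set_plus_mod M (span_fin V M F) (pi_mult V M p n T0)" and "y = f x"
    by blast
  then obtain a t where a: "a \<in> span_fin V M F" and t: "t \<in> T0"
    and y: "y = f (a \<oplus>\<^bsub>M\<^esub> M.pi_pow n \<odot>\<^bsub>M\<^esub> t)"
    unfolding set_plus_mod_def pi_mult_def by blast
  have "a \<in> carrier M"
    using M.span_fin_subset_submodule[OF F(1) M.carrier_is_submodule F(2)] a by blast
  then have "y = f a \<oplus>\<^bsub>C\<^esub> C.pi_pow n \<odot>\<^bsub>C\<^esub> f t"
    using y f t T0(1) unfolding linear_map_def by (auto simp: subsetD)
  moreover have "f a \<in> span_fin V C (f ` F)"
    using linear_map_span_fin_image[OF modules f F] a by blast
  moreover have "C.pi_pow n \<odot>\<^bsub>C\<^esub> f t \<in> pi_mult V C p n T"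
    using C.pi_mult_memI T0(2) t by blast
  ultimately show "y \<in> set_plus_mod C (span_fin V C (f ` F)) (pi_mult V C p n T)"
    unfolding set_plus_mod_def by blast
qed

lemma compactoid_image:
  assumes p: "p \<in> carrier V"
    and M: "bornological_module V M BM" and C: "bornological_module V C BC"
    and f: "bounded_map V M BM C BC f" and S: "compactoid V p M BM S"
  shows "compactoid V p C BC (f ` S)"
proof -
  have modules: "module V M" "module V C"
    using M C by (simp_all add: bornological_moduleD(1))
  interpret M: module V M
    by (fact modules(1))
  have lin: "linear_map V M C f"
    using f unfolding bounded_map_def by blast
  obtain T0 F where T0: "T0 \<in> BM" "submodule T0 V M" "S \<subseteq> T0" and F: "\<And>n. finite (F n)" "\<And>n. F n \<subseteq> T0"
    "\<And>n. S \<subseteq> set_plus_mod M (span_fin V M (F n)) (pi_mult V M p n T0)"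
    using S by (rule compactoidE) blast
  have "f ` T0 \<in> BC"
    using f T0(1) unfolding bounded_map_def by blast
  then obtain T where T: "T \<in> BC" "submodule T V C" "f ` T0 \<subseteq> T"
    using bornological_moduleD(6)[OF C] by blast
  have T0_carrier: "T0 \<subseteq> carrier M" and F_carrier: "\<And>n. F n \<subseteq> carrier M"
    using M.submoduleE(1)[OF T0(2)] F(2) by blast+
  have approx: "f ` S \<subseteq> set_plus_mod C (span_fin V C (f ` F n)) (pi_mult V C p n T)" for n
    using image_mono[OF F(3)] linear_map_image_approximation[OF p modules lin F(1) F_carrier T0_carrier T(3)]
    by (rule subset_trans)
  have "f ` S \<subseteq> T"
    using T0(3) T(3) by blast
  moreover have "f ` F n \<subseteq> T" for n
    using F(2) T(3) by blast
  ultimately show ?thesis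
    using F(1) by (intro compactoidI[where F = "\<lambda>n. f ` F n", OF T(1,2) _ _ _ approx]) auto
qed

lemma is_completion_minimal_bornology:
  fixes C :: "('v, 'c) module"
  assumes compl: "is_completion V p M BM C BC \<iota>"
    and B': "bornological_module V C B'" "complete_born V p C B'" "bounded_map V M BM C B' \<iota>"
    and B'_BC: "B' \<subseteq> BC"
  shows "B' = BC"
proof
  have BC: "bornological_module V C BC" "complete_born V p C BC" "bounded_map V M BM C BC \<iota>"
    and univ: "\<forall>(D::('v, 'c) module) BD g.
        bornological_module V D BD \<and> complete_born V p D BD \<and> bounded_map V M BM D BD g \<longrightarrow>
        (\<exists>h. bounded_map V C BC D BD h \<and> (\<forall>x\<in>carrier M. h (\<iota> x) = g x) \<and>
             (\<forall>h'. bounded_map V C BC D BD h' \<and> (\<forall>x\<in>carrier M. h' (\<iota> x) = g x) \<longrightarrow>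
                   (\<forall>y\<in>carrier C. h' y = h y)))"
    using compl unfolding is_completion_def by blast+
  obtain h where h: "bounded_map V C BC C B' h" "\<forall>x\<in>carrier M. h (\<iota> x) = \<iota> x"
    using univ B' by blast
  obtain h0 where h0: "\<And>h'. bounded_map V C BC C BC h' \<Longrightarrow> \<forall>x\<in>carrier M. h' (\<iota> x) = \<iota> x \<Longrightarrow>
      \<forall>y\<in>carrier C. h' y = h0 y"
    using univ BC by blast
  have id_bounded: "bounded_map V C BC C BC (\<lambda>y. y)"
    unfolding bounded_map_def linear_map_def by auto
  have h_bounded: "bounded_map V C BC C BC h"
    using h(1) B'_BC unfolding bounded_map_def by blast
  have "\<forall>y\<in>carrier C. y = h0 y"
    by (rule h0[OF id_bounded]) simp
  moreover have "\<forall>y\<in>carrier C. h y = h0 y"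
    by (rule h0[OF h_bounded h(2)])
  ultimately have h_id: "\<forall>y\<in>carrier C. h y = y"
    by simp
  show "BC \<subseteq> B'"
  proof
    fix S assume "S \<in> BC"
    moreover have "h ` S = S"
      using h_id bornological_moduleD(2)[OF BC(1) \<open>S \<in> BC\<close>] by (force simp: subsetD)
    ultimately show "S \<in> B'"
      using h(1) unfolding bounded_map_def by metis
  qed
qed (rule B'_BC)

theorem lemma4p4:
  fixes V :: "('v, 'x) ring_scheme" and p :: 'v
    and M :: "('v, 'm) module" and BM :: "'m set set"
    and C :: "('v, 'c) module" and BC :: "'c set set" and \<iota> :: "'m \<Rightarrow> 'c"
  assumes "complete_dvr V p"
    and "bornological_module V M BM"
    and "nuclear V p M BM"
    and "is_completion V p M BM C BC \<iota>"
  shows "bornological_module V C BC \<and> nuclear V p C BC"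
proof -
  have p: "p \<in> carrier V"
    using assms(1) unfolding complete_dvr_def by blast
  have C: "bornological_module V C BC" "complete_born V p C BC" "bounded_map V M BM C BC \<iota>"
    using assms(4) unfolding is_completion_def by blast+
  interpret C: pi_module V C p
    using bornological_moduleD(1)[OF C(1)] p by (rule pi_moduleI)
  have "bounded_map V M BM C {S. compactoid V p C BC S} \<iota>"
    using C(3) compactoid_image[OF p assms(2) C(1) C(3)] assms(3)
    unfolding bounded_map_def nuclear_def by blast
  then have "{S. compactoid V p C BC S} = BC"
    using is_completion_minimal_bornology[OF assms(4)] C.bornological_module_compactoids[OF C(1)]
      C.complete_born_compactoids[OF C(1,2)] compactoid_imp_bounded[OF C(1)] by blast
  then show ?thesis
    using C(1) unfolding nuclear_def by blast
qed

end
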